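(* $\mathcal A/\mathcal A_1\cong\mathbb Z_2$, and for all integers $n\ge1$, $$\mathcal A_{2n-1}/\mathcal A_{2n+1}\cong\mathbb Z_2\times\mathbb Z_2.$$
   Context: Over $\mathbb F_2$, the Appell subgroup $\mathcal A$ of the Riordan group is the abelian group of Riordan arrays $(g,t)$ with $g\in\mathbb F_2[[t]]$, $g(0)=1$, with product $(g_1,t)(g_2,t)=(g_1g_2,t)$. For $n\ge0$, $\mathcal A_n=\{(g,t)\in\mathcal A: g\equiv 1\pmod{t^{n+1}}\}$, i.e. $g=1+\alpha_{n+1}t^{n+1}+\alpha_{n+2}t^{n+2}+\cdots$. $\mathbb Z_2=\mathbb Z/2\mathbb Z$. *)

theory Defs
  imports "HOL-Algebra.Algebra" "HOL-Computational_Algebra.Formal_Power_Series" "HOL-Library.Z2"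
begin

text \<open>The Appell subgroup of the Riordan group over F_2: an element (g,t) is identified
  with its power series g in F_2[[t]] with g(0) = 1; the product is (g1 g2, t).\<close>

definition appell :: "bit fps monoid" where
  "appell = \<lparr> carrier = {g. fps_nth g 0 = 1}, monoid.mult = (\<lambda>g h. g * h), one = 1 \<rparr>"

definition appell_sub :: "nat \<Rightarrow> bit fps set" where
  "appell_sub n = {g \<in> carrier appell. \<forall>k\<in>{1..n}. fps_nth g k = 0}"

end

theory Submission
  imports Defs
begin

text \<open>If \<open>f\<close> and \<open>g\<close> are \<open>1\<close> modulo \<open>t^(m+1)\<close>, all cross terms of \<open>f * g\<close> below
  degree \<open>2m + 2\<close> vanish, so on \<open>\<A>\<^sub>j\<close> the coefficients of degrees \<open>j + 1, \<dots>, 2j + 1\<close> are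
  additive. Over \<open>\<bbbF>\<^sub>2\<close> each of them is thus a homomorphism onto \<open>\<int>\<^sub>2\<close>, and two consecutive
  ones (both in range once \<open>j \<ge> 1\<close>) give a homomorphism onto \<open>\<int>\<^sub>2 \<times> \<int>\<^sub>2\<close>. Their kernels are
  \<open>\<A>\<^sub>j\<^sub>+\<^sub>1\<close> and \<open>\<A>\<^sub>j\<^sub>+\<^sub>2\<close>, and the first isomorphism theorem does the rest, with \<open>\<A> = \<A>\<^sub>0\<close>.\<close>

unbundle fps_syntax

lemma fps_mult_nth_eq_add:
  fixes f g :: "'a::comm_semiring_1 fps"
  assumes f: "f $ 0 = 1" "\<forall>i\<in>{1..m}. f $ i = 0"
    and g: "g $ 0 = 1" "\<forall>i\<in>{1..m}. g $ i = 0"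
    and k: "0 < k" "k \<le> 2*m + 1"
  shows "(f * g) $ k = f $ k + g $ k"
proof -
  have "(f * g) $ k = (\<Sum>i\<in>{0..k}. f $ i * g $ (k - i))"
    by (simp add: fps_mult_nth)
  also have "\<dots> = (\<Sum>i\<in>{0, k}. f $ i * g $ (k - i))"
  proof (rule sum.mono_neutral_right)
    show "\<forall>i\<in>{0..k} - {0, k}. f $ i * g $ (k - i) = 0"
    proof
      fix i assume i: "i \<in> {0..k} - {0, k}"
      show "f $ i * g $ (k - i) = 0"
      proof (cases "i \<le> m")
        case True
        then show ?thesis using i f by auto
      next
        case False
        then have "k - i \<in> {1..m}" using i k by auto
        then show ?thesis using g by auto
      qed
    qed
  qed auto
  also have "\<dots> = f $ k + g $ k"
    using f g k by (simp add: add.commute)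
  finally show ?thesis .
qed

lemma fps_inverse_nth_eq_0:
  fixes g :: "'a::field fps"
  assumes "g $ 0 = 1" "\<forall>i\<in>{1..m}. g $ i = 0" "k \<in> {1..m}"
  shows "inverse g $ k = 0"
proof -
  have "0 = (g * inverse g) $ k"
    using assms by (simp add: inverse_mult_eq_1')
  also have "\<dots> = (\<Sum>i\<in>{0..k}. g $ i * inverse g $ (k - i))"
    by (simp add: fps_mult_nth)
  also have "\<dots> = (\<Sum>i\<in>{0}. g $ i * inverse g $ (k - i))"
    by (rule sum.mono_neutral_right) (use assms in auto)
  also have "\<dots> = inverse g $ k"
    using assms by simp
  finally show ?thesis by simp
qed

lemma of_bit_add: "(of_bit (a + b) :: int) = (of_bit a + of_bit b) mod 2"
  by (cases a; cases b) simp_all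

lemma of_bit_eq_0_iff: "(of_bit a :: int) = 0 \<longleftrightarrow> a = 0"
  by (cases a) simp_all

lemma range_of_bit: "range (of_bit :: bit \<Rightarrow> int) = carrier (integer_mod_group 2)"
proof -
  have "x \<in> range (of_bit :: bit \<Rightarrow> int)" if "x \<in> {0..<2}" for x :: int
    using that rangeI[of "of_bit :: bit \<Rightarrow> int" 0] rangeI[of "of_bit :: bit \<Rightarrow> int" 1]
    by (cases "x = 0") auto
  moreover have "(of_bit a :: int) \<in> {0..<2}" for a :: bit
    by simp
  ultimately show ?thesis
    by (auto simp: carrier_integer_mod_group)
qed

lemma carrier_appell [simp]: "carrier appell = {g. g $ 0 = 1}"
  and mult_appell [simp]: "monoid.mult appell = (*)"
  and one_appell [simp]: "one appell = 1"
  by (simp_all add: appell_def)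

lemma group_appell: "group appell"
proof (rule groupI)
  fix g assume "g \<in> carrier appell"
  then show "\<exists>h\<in>carrier appell. h \<otimes>\<^bsub>appell\<^esub> g = \<one>\<^bsub>appell\<^esub>"
    by (intro bexI[of _ "inverse g"]) (auto simp: inverse_mult_eq_1)
qed (auto simp: mult.assoc)

lemma inv_appell: "g \<in> carrier appell \<Longrightarrow> inv\<^bsub>appell\<^esub> g = inverse g"
  by (rule group.inv_equality[OF group_appell]) (auto simp: inverse_mult_eq_1)

lemma appell_sub_0: "appell_sub 0 = carrier appell"
  by (simp add: appell_sub_def)

lemma appell_sub_Suc: "appell_sub (Suc j) = {g \<in> appell_sub j. g $ Suc j = 0}"
  by (auto simp: appell_sub_def atLeastAtMostSuc_conv)

lemma subgroup_appell_sub: "subgroup (appell_sub m) appell"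
proof
  show "appell_sub m \<subseteq> carrier appell" "\<one>\<^bsub>appell\<^esub> \<in> appell_sub m"
    by (auto simp: appell_sub_def)
next
  fix f g assume "f \<in> appell_sub m" "g \<in> appell_sub m"
  then show "f \<otimes>\<^bsub>appell\<^esub> g \<in> appell_sub m"
    using fps_mult_nth_eq_add[of f m g] by (auto simp: appell_sub_def)
next
  fix g assume "g \<in> appell_sub m"
  then show "inv\<^bsub>appell\<^esub> g \<in> appell_sub m"
    using fps_inverse_nth_eq_0[of g m] by (auto simp: appell_sub_def inv_appell)
qed

lemma group_appell_sub: "group (appell\<lparr>carrier := appell_sub j\<rparr>)"
  by (rule group.subgroup_imp_group[OF group_appell subgroup_appell_sub])

lemma appell_sub_realises_coeffs:
  "\<exists>g\<in>appell_sub j. g $ Suc j = a \<and> g $ Suc (Suc j) = b"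
  by (rule bexI[of _ "Abs_fps (\<lambda>i. if i = 0 then 1 else if i = Suc j then a
      else if i = Suc (Suc j) then b else 0)"]) (auto simp: appell_sub_def)

lemma coeff_hom_appell_sub:
  assumes "j < k" "k \<le> 2*j + 1"
  shows "(\<lambda>g. of_bit (g $ k)) \<in> hom (appell\<lparr>carrier := appell_sub j\<rparr>) (integer_mod_group 2)"
proof (rule homI)
  fix g show "of_bit (g $ k) \<in> carrier (integer_mod_group 2)"
    using range_of_bit by blast
next
  fix f g assume "f \<in> carrier (appell\<lparr>carrier := appell_sub j\<rparr>)"
    "g \<in> carrier (appell\<lparr>carrier := appell_sub j\<rparr>)"
  then have "(f * g) $ k = f $ k + g $ k"
    using assms fps_mult_nth_eq_add[of f j g k] by (simp add: appell_sub_def)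
  then show "of_bit ((f \<otimes>\<^bsub>appell\<lparr>carrier := appell_sub j\<rparr>\<^esub> g) $ k)
      = of_bit (f $ k) \<otimes>\<^bsub>integer_mod_group 2\<^esub> of_bit (g $ k)"
    by (simp add: of_bit_add del: of_bool_eq)
qed

theorem appell_sub_quotient_Suc:
  "appell\<lparr>carrier := appell_sub j\<rparr> Mod appell_sub (Suc j) \<cong> integer_mod_group 2"
proof -
  let ?G = "appell\<lparr>carrier := appell_sub j\<rparr>"
    and ?h = "\<lambda>g. of_bit (g $ Suc j) :: int"
  have h_hom: "?h \<in> hom ?G (integer_mod_group 2)"
    using coeff_hom_appell_sub[of j "Suc j"] by simp
  then have hom: "group_hom ?G (integer_mod_group 2) ?h"
    using group_appell_sub by (simp add: group_hom_def group_hom_axioms_def)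
  have onto: "?h ` carrier ?G = carrier (integer_mod_group 2)"
  proof
    show "?h ` carrier ?G \<subseteq> carrier (integer_mod_group 2)"
      using hom_carrier[OF h_hom] .
    show "carrier (integer_mod_group 2) \<subseteq> ?h ` carrier ?G"
    proof
      fix x assume "x \<in> carrier (integer_mod_group 2)"
      then obtain a where "x = of_bit a"
        unfolding range_of_bit[symmetric] by blast
      moreover obtain g where "g \<in> appell_sub j" "g $ Suc j = a"
        using appell_sub_realises_coeffs by blast
      ultimately show "x \<in> ?h ` carrier ?G"
        by force
    qed
  qed
  have ker: "kernel ?G (integer_mod_group 2) ?h = appell_sub (Suc j)"
    by (auto simp: kernel_def appell_sub_Suc of_bit_eq_0_iff simp del: of_bool_eq)
  show ?thesis
    using group_hom.FactGroup_iso[OF hom onto] unfolding ker .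
qed

theorem appell_sub_quotient_Suc_Suc:
  assumes "1 \<le> j"
  shows "appell\<lparr>carrier := appell_sub j\<rparr> Mod appell_sub (Suc (Suc j))
    \<cong> integer_mod_group 2 \<times>\<times> integer_mod_group 2"
proof -
  let ?G = "appell\<lparr>carrier := appell_sub j\<rparr>"
    and ?H = "integer_mod_group 2 \<times>\<times> integer_mod_group 2"
    and ?h = "\<lambda>g. (of_bit (g $ Suc j) :: int, of_bit (g $ Suc (Suc j)) :: int)"
  have h_hom: "?h \<in> hom ?G ?H"
    using assms coeff_hom_appell_sub[of j "Suc j"] coeff_hom_appell_sub[of j "Suc (Suc j)"]
    by (simp add: hom_paired)
  then have hom: "group_hom ?G ?H ?h"
    using group_appell_sub by (simp add: group_hom_def group_hom_axioms_def DirProd_group)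
  have onto: "?h ` carrier ?G = carrier ?H"
  proof
    show "?h ` carrier ?G \<subseteq> carrier ?H"
      using hom_carrier[OF h_hom] .
    show "carrier ?H \<subseteq> ?h ` carrier ?G"
    proof
      fix p assume "p \<in> carrier ?H"
      then obtain a b where "p = (of_bit a, of_bit b)"
        unfolding carrier_DirProd range_of_bit[symmetric] by blast
      moreover obtain g where "g \<in> appell_sub j" "g $ Suc j = a" "g $ Suc (Suc j) = b"
        using appell_sub_realises_coeffs by blast
      ultimately show "p \<in> ?h ` carrier ?G"
        by force
    qed
  qed
  have ker: "kernel ?G ?H ?h = appell_sub (Suc (Suc j))"
    by (auto simp: kernel_def appell_sub_Suc of_bit_eq_0_iff simp del: of_bool_eq)
  show ?thesis
    using group_hom.FactGroup_iso[OF hom onto] unfolding ker .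
qed

theorem corollary6:
  shows "appell Mod appell_sub 1 \<cong> integer_mod_group 2 \<and>
         (\<forall>n::nat. n \<ge> 1 \<longrightarrow>
           (appell\<lparr>carrier := appell_sub (2*n-1)\<rparr>) Mod appell_sub (2*n+1)
             \<cong> integer_mod_group 2 \<times>\<times> integer_mod_group 2)"
proof (intro conjI allI impI)
  have "appell\<lparr>carrier := appell_sub 0\<rparr> = appell"
    by (simp add: appell_sub_0)
  then show "appell Mod appell_sub 1 \<cong> integer_mod_group 2"
    using appell_sub_quotient_Suc[of 0] by simp
next
  fix n :: nat assume "n \<ge> 1"
  then have "2*n + 1 = Suc (Suc (2*n - 1))" and "1 \<le> 2*n - 1"
    by simp_all
  then show "appell\<lparr>carrier := appell_sub (2*n-1)\<rparr> Mod appell_sub (2*n+1)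
      \<cong> integer_mod_group 2 \<times>\<times> integer_mod_group 2"
    using appell_sub_quotient_Suc_Suc by presburger
qed

end
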